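(* Let $(x_k)$ be a bounded sequence in a real Banach space $X$, let $x\in X$ and $c>0$, and suppose that $(x_k-x)$ generates an $\ell_1$-spreading model with some constant strictly greater than $c$. Then there is $n\in\mathbb N$ such that $\operatorname{asep}((x_{k^2})_{k\ge n})>2c$.
   Context: A bounded sequence $(y_k)$ generates an $\ell_1$-spreading model with constant $\delta>0$ if $\|\sum_{i\in F}\alpha_i y_i\|\ge\delta\sum_{i\in F}|\alpha_i|$ for every finite $F\subset\mathbb N$ with $\#F\le\min F$ and all real $(\alpha_i)_{i\in F}$. For a bounded sequence $(z_j)_{j\ge1}$, $\operatorname{asep}(z_j)=\inf\{\|\frac1{\#F}(\sum_{j\in F}z_j-\sum_{j\in H}z_j)\|: F,H\subset\mathbb N\text{ finite nonempty},\ \#F=\#H,\ \max F<\min H\}$; here it is applied to the sequence $j\mapsto x_{(n+j-1)^2}$, $j\ge1$. *)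

theory Defs
  imports "HOL-Analysis.Analysis"
begin

text \<open>Natural numbers are read as positive integers (indices start at 1).
  A bounded sequence y generates an l1-spreading model with constant delta.\<close>
definition ell1_spreading_model :: "(nat \<Rightarrow> 'a::real_normed_vector) \<Rightarrow> real \<Rightarrow> bool" where
  "ell1_spreading_model y \<delta> \<longleftrightarrow>
     bounded (range y) \<and>
     (\<forall>F (\<alpha>::nat \<Rightarrow> real). finite F \<and> F \<noteq> {} \<and> card F \<le> Min F \<longrightarrow>
        \<delta> * (\<Sum>i\<in>F. \<bar>\<alpha> i\<bar>) \<le> norm (\<Sum>i\<in>F. \<alpha> i *\<^sub>R y i))"

definition asep :: "(nat \<Rightarrow> 'a::real_normed_vector) \<Rightarrow> real" where
  "asep z = Inf {norm ((1 / real (card F)) *\<^sub>R ((\<Sum>j\<in>F. z j) - (\<Sum>j\<in>H. z j))) | F H.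
      finite F \<and> finite H \<and> F \<noteq> {} \<and> H \<noteq> {} \<and> F \<subseteq> {1..} \<and> H \<subseteq> {1..} \<and>
      card F = card H \<and> Max F < Min H}"

end

theory Submission
  imports Defs
begin

text \<open>Put y k = x k - x0, bounded by M, with spreading constant \<delta> > c. For blocks F < H of
  size m, the average difference of the terms x (k^2) over F and over H equals a combination
  of the y (k^2) with coefficients \<plusminus>1/m, because the copies of x0 cancel. The indices with
  k^2 \<ge> 2m form an admissible set, so they contribute at least \<delta> times their share of the
  total coefficient mass 2. When the squares start at n^2, fewer than 2m/n indices have
  k^2 < 2m, and they cost at most (\<delta> + M) 2/n. Choosing n with 2(\<delta> + M)/n \<le> \<delta> - c bounds
  every average difference below by \<delta> + c > 2c.\<close>

lemma ell1_spreading_model_norm_sum_ge: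
  fixes y :: "nat \<Rightarrow> 'a::real_normed_vector"
  assumes sp: "ell1_spreading_model y \<delta>" and S: "finite S" and inj: "inj_on \<phi> S"
    and admissible: "\<forall>i\<in>S. card S \<le> \<phi> i"
  shows "\<delta> * (\<Sum>i\<in>S. \<bar>\<beta> i\<bar>) \<le> norm (\<Sum>i\<in>S. \<beta> i *\<^sub>R y (\<phi> i))"
proof (cases "S = {}")
  case False
  define \<alpha> where "\<alpha> = \<beta> \<circ> inv_into S \<phi>"
  have \<alpha>: "\<alpha> (\<phi> i) = \<beta> i" if "i \<in> S" for i
    using that inj by (simp add: \<alpha>_def)
  have "card (\<phi> ` S) \<le> Min (\<phi> ` S)"
    using S False admissible by (simp add: card_image[OF inj])
  then have bound: "\<delta> * (\<Sum>g\<in>\<phi> ` S. \<bar>\<alpha> g\<bar>) \<le> norm (\<Sum>g\<in>\<phi> ` S. \<alpha> g *\<^sub>R y g)"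
    using sp S False unfolding ell1_spreading_model_def by blast
  have "(\<Sum>g\<in>\<phi> ` S. \<bar>\<alpha> g\<bar>) = (\<Sum>i\<in>S. \<bar>\<beta> i\<bar>)"
    unfolding sum.reindex[OF inj] by (intro sum.cong) (simp_all add: \<alpha>)
  moreover have "(\<Sum>g\<in>\<phi> ` S. \<alpha> g *\<^sub>R y g) = (\<Sum>i\<in>S. \<beta> i *\<^sub>R y (\<phi> i))"
    unfolding sum.reindex[OF inj] by (intro sum.cong) (simp_all add: \<alpha>)
  ultimately show ?thesis
    using bound by (simp only:)
qed simp

lemma ell1_spreading_model_norm_sum_ge_split:
  fixes y :: "nat \<Rightarrow> 'a::real_normed_vector"
  assumes sp: "ell1_spreading_model y \<delta>" and M: "\<forall>k. norm (y k) \<le> M"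
    and I: "finite I" and inj: "inj_on \<phi> I" and T: "card I \<le> T"
  shows "\<delta> * (\<Sum>i\<in>I. \<bar>\<beta> i\<bar>) - (\<delta> + M) * (\<Sum>i\<in>{i\<in>I. \<phi> i < T}. \<bar>\<beta> i\<bar>)
           \<le> norm (\<Sum>i\<in>I. \<beta> i *\<^sub>R y (\<phi> i))"
proof -
  define S where "S = {i\<in>I. T \<le> \<phi> i}"
  define D where "D = {i\<in>I. \<phi> i < T}"
  have fin: "finite S" "finite D" and disj: "S \<inter> D = {}" and I_eq: "I = S \<union> D"
    using I by (auto simp: S_def D_def)
  have "card S \<le> T"
    using T card_mono[OF I, of S] by (auto simp: S_def)
  then have lower: "\<delta> * (\<Sum>i\<in>S. \<bar>\<beta> i\<bar>) \<le> norm (\<Sum>i\<in>S. \<beta> i *\<^sub>R y (\<phi> i))"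
    by (intro ell1_spreading_model_norm_sum_ge[OF sp fin(1)] inj_on_subset[OF inj])
      (auto simp: S_def)
  have "norm (\<Sum>i\<in>D. \<beta> i *\<^sub>R y (\<phi> i)) \<le> (\<Sum>i\<in>D. norm (\<beta> i *\<^sub>R y (\<phi> i)))"
    by (rule norm_sum)
  also have "\<dots> \<le> (\<Sum>i\<in>D. \<bar>\<beta> i\<bar> * M)"
    using M by (intro sum_mono) (simp add: mult_left_mono)
  finally have upper: "norm (\<Sum>i\<in>D. \<beta> i *\<^sub>R y (\<phi> i)) \<le> M * (\<Sum>i\<in>D. \<bar>\<beta> i\<bar>)"
    by (simp add: sum_distrib_left mult.commute)
  have "norm (\<Sum>i\<in>S. \<beta> i *\<^sub>R y (\<phi> i)) - norm (\<Sum>i\<in>D. \<beta> i *\<^sub>R y (\<phi> i))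
      \<le> norm (\<Sum>i\<in>I. \<beta> i *\<^sub>R y (\<phi> i))"
    unfolding I_eq sum.union_disjoint[OF fin disj] by (rule norm_diff_ineq)
  moreover have "(\<Sum>i\<in>I. \<bar>\<beta> i\<bar>) = (\<Sum>i\<in>S. \<bar>\<beta> i\<bar>) + (\<Sum>i\<in>D. \<bar>\<beta> i\<bar>)"
    unfolding I_eq by (rule sum.union_disjoint[OF fin disj])
  then have "\<delta> * (\<Sum>i\<in>I. \<bar>\<beta> i\<bar>) - (\<delta> + M) * (\<Sum>i\<in>D. \<bar>\<beta> i\<bar>)
      = \<delta> * (\<Sum>i\<in>S. \<bar>\<beta> i\<bar>) - M * (\<Sum>i\<in>D. \<bar>\<beta> i\<bar>)"
    by (simp add: algebra_simps)
  ultimately show ?thesis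
    using lower upper unfolding D_def by linarith
qed

text \<open>The shift by z0 is free because both sums have the same number of terms.\<close>

lemma average_difference_eq_signed_sum:
  fixes z :: "nat \<Rightarrow> 'a::real_vector"
  assumes F: "finite F" and H: "finite H" and disj: "F \<inter> H = {}" and card: "card F = card H"
  shows "(1 / card F) *\<^sub>R ((\<Sum>j\<in>F. z j) - (\<Sum>j\<in>H. z j))
       = (\<Sum>j\<in>F \<union> H. (if j \<in> F then 1 / card F else - 1 / card F) *\<^sub>R (z j - z0))"
proof -
  let ?a = "1 / real (card F)"
  have "(\<Sum>j\<in>F \<union> H. (if j \<in> F then 1 / card F else - 1 / card F) *\<^sub>R (z j - z0))
      = (\<Sum>j\<in>F. ?a *\<^sub>R (z j - z0)) - (\<Sum>j\<in>H. ?a *\<^sub>R (z j - z0))"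
    unfolding sum.union_disjoint[OF F H disj] diff_conv_add_uminus sum_negf[symmetric]
    using disj by (intro arg_cong2[where f = "(+)"] sum.cong) auto
  also have "\<dots> = ?a *\<^sub>R ((\<Sum>j\<in>F. z j - z0) - (\<Sum>j\<in>H. z j - z0))"
    by (simp only: scaleR_sum_right scaleR_diff_right)
  also have "(\<Sum>j\<in>F. z j - z0) - (\<Sum>j\<in>H. z j - z0) = (\<Sum>j\<in>F. z j) - (\<Sum>j\<in>H. z j)"
    by (simp add: sum_subtractf sum_constant_scaleR card)
  finally show ?thesis ..
qed

lemma card_small_shifted_squares:
  fixes n N :: nat
  assumes I: "finite I" "I \<subseteq> {1..}" and n: "n \<ge> 1"
  shows "card {j\<in>I. (n + j - 1)^2 < N} * n \<le> N"
proof (cases "{j\<in>I. (n + j - 1)^2 < N} = {}")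
  case False
  define D where "D = {j\<in>I. (n + j - 1)^2 < N}"
  have D: "finite D" "D \<noteq> {}"
    using I False by (auto simp: D_def)
  define k where "k = Max D"
  have k: "k \<in> D"
    unfolding k_def using D by (rule Max_in)
  have "D \<subseteq> {1..k}"
    using I D by (auto simp: D_def k_def)
  then have "card D \<le> k"
    using card_mono[of "{1..k}" D] by simp
  then have "card D * n \<le> k * n"
    by simp
  also have "\<dots> \<le> (n + k - 1) * (n + k - 1)"
    using I n k by (intro mult_le_mono) (auto simp: D_def)
  also have "\<dots> < N"
    using k by (simp add: D_def power2_eq_square)
  finally show ?thesis
    by (simp add: D_def)
qed (simp only: card.empty mult_0 zero_le)

lemma asep_ge:
  assumes "\<And>F H. finite F \<Longrightarrow> finite H \<Longrightarrow> F \<noteq> {} \<Longrightarrow> H \<noteq> {} \<Longrightarrow> F \<subseteq> {1..} \<Longrightarrow>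
      H \<subseteq> {1..} \<Longrightarrow> card F = card H \<Longrightarrow> Max F < Min H \<Longrightarrow>
      b \<le> norm ((1 / real (card F)) *\<^sub>R ((\<Sum>j\<in>F. z j) - (\<Sum>j\<in>H. z j)))"
  shows "b \<le> asep z"
  unfolding asep_def
proof (rule cInf_greatest)
  have "norm ((1 / real (card {1::nat})) *\<^sub>R ((\<Sum>j\<in>{1}. z j) - (\<Sum>j\<in>{2}. z j)))
      \<in> {norm ((1 / real (card F)) *\<^sub>R ((\<Sum>j\<in>F. z j) - (\<Sum>j\<in>H. z j))) | F H.
      finite F \<and> finite H \<and> F \<noteq> {} \<and> H \<noteq> {} \<and> F \<subseteq> {1..} \<and> H \<subseteq> {1..} \<and>
      card F = card H \<and> Max F < Min H}"
    by (intro CollectI exI[of _ "{1::nat}"] exI[of _ "{2::nat}"]) simp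
  then show "{norm ((1 / real (card F)) *\<^sub>R ((\<Sum>j\<in>F. z j) - (\<Sum>j\<in>H. z j))) | F H.
      finite F \<and> finite H \<and> F \<noteq> {} \<and> H \<noteq> {} \<and> F \<subseteq> {1..} \<and> H \<subseteq> {1..} \<and>
      card F = card H \<and> Max F < Min H} \<noteq> {}"
    by blast
qed (use assms in blast)

lemma norm_average_difference_shifted_squares_ge:
  fixes x :: "nat \<Rightarrow> 'a::real_normed_vector"
  assumes sp: "ell1_spreading_model (\<lambda>k. x k - x0) \<delta>" and M: "\<forall>k. norm (x k - x0) \<le> M"
    and \<delta>: "0 \<le> \<delta>" and n: "n \<ge> 1" and n_large: "2 * (\<delta> + M) \<le> (\<delta> - c) * n"
    and F: "finite F" "F \<noteq> {}" "F \<subseteq> {1..}" and H: "finite H" "H \<subseteq> {1..}"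
    and card: "card F = card H" and FH: "Max F < Min H"
  shows "\<delta> + c \<le> norm ((1 / card F) *\<^sub>R ((\<Sum>j\<in>F. x ((n + j - 1)^2)) - (\<Sum>j\<in>H. x ((n + j - 1)^2))))"
proof -
  define m where "m = card F"
  define I where "I = F \<union> H"
  define \<beta> where "\<beta> j = (if j \<in> F then 1 / real m else - 1 / real m)" for j
  have abs_\<beta>: "\<bar>\<beta> j\<bar> = 1 / real m" for j
    by (simp add: \<beta>_def)
  define D where "D = {j\<in>I. (n + j - 1)^2 < 2 * m}"
  have m: "m \<ge> 1"
    using F by (simp add: m_def Suc_le_eq card_gt_0_iff)
  have disj: "F \<inter> H = {}"
  proof (rule ccontr)
    assume "F \<inter> H \<noteq> {}"
    then obtain j where "j \<in> F" "j \<in> H"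
      by blast
    then have "j \<le> Max F" "Min H \<le> j"
      using F(1) H(1) by simp_all
    with FH show False
      by linarith
  qed
  have I: "finite I" "I \<subseteq> {1..}" "card I = 2 * m"
    using F H card_Un_disjoint[OF F(1) H(1) disj] by (simp_all add: I_def m_def card)
  have inj: "inj_on (\<lambda>j. (n + j - 1)^2) I"
  proof (rule inj_onI)
    fix a b assume "(n + a - 1)^2 = (n + b - 1)^2"
    then have "n + a - 1 = n + b - 1"
      by (simp add: power2_eq_iff)
    with n show "a = b"
      by simp
  qed
  have average: "(1 / card F) *\<^sub>R ((\<Sum>j\<in>F. x ((n + j - 1)^2)) - (\<Sum>j\<in>H. x ((n + j - 1)^2)))
      = (\<Sum>j\<in>I. \<beta> j *\<^sub>R (x ((n + j - 1)^2) - x0))"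
    unfolding I_def \<beta>_def m_def by (rule average_difference_eq_signed_sum[OF F(1) H(1) disj card])
  have "2 * \<delta> - (\<delta> + M) * (card D / m)
      = \<delta> * (\<Sum>j\<in>I. \<bar>\<beta> j\<bar>) - (\<delta> + M) * (\<Sum>j\<in>D. \<bar>\<beta> j\<bar>)"
    using I(3) m by (simp add: abs_\<beta>)
  also have "\<dots> \<le> norm (\<Sum>j\<in>I. \<beta> j *\<^sub>R (x ((n + j - 1)^2) - x0))"
    unfolding D_def using ell1_spreading_model_norm_sum_ge_split[OF sp M I(1) inj, of "2 * m"] I
    by simp
  also have "\<dots> = norm ((1 / card F) *\<^sub>R ((\<Sum>j\<in>F. x ((n + j - 1)^2)) - (\<Sum>j\<in>H. x ((n + j - 1)^2))))"
    unfolding average ..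
  finally have bound: "2 * \<delta> - (\<delta> + M) * (card D / m)
      \<le> norm ((1 / card F) *\<^sub>R ((\<Sum>j\<in>F. x ((n + j - 1)^2)) - (\<Sum>j\<in>H. x ((n + j - 1)^2))))" .
  have "card D * n \<le> 2 * m"
    unfolding D_def by (rule card_small_shifted_squares[OF I(1,2) n])
  then have "real (card D) * real n \<le> 2 * real m"
    by (metis of_nat_le_iff of_nat_mult of_nat_numeral)
  moreover have "0 \<le> \<delta> + M"
    using \<delta> M[rule_format, of 0] norm_ge_zero[of "x 0 - x0"] by linarith
  ultimately have "(\<delta> + M) * (real (card D) * real n) \<le> (\<delta> + M) * (2 * real m)"
    by (rule mult_left_mono)
  also have "\<dots> \<le> (\<delta> - c) * n * m"
    using n_large m by (simp add: mult.assoc mult_right_mono)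
  finally have "((\<delta> + M) * card D) * n \<le> ((\<delta> - c) * m) * n"
    by (simp add: algebra_simps)
  then have "(\<delta> + M) * card D \<le> (\<delta> - c) * m"
    using n by simp
  then have "(\<delta> + M) * (card D / m) \<le> \<delta> - c"
    using m by (simp add: field_simps)
  with bound show ?thesis
    by linarith
qed

theorem lemma4p6:
  fixes x :: "nat \<Rightarrow> 'a::banach" and x0 :: 'a and c :: real
  assumes "bounded (range x)"
    and "c > 0"
    and "\<exists>\<delta>>c. ell1_spreading_model (\<lambda>k. x k - x0) \<delta>"
  shows "\<exists>n\<ge>1. asep (\<lambda>j. x ((n + j - 1)^2)) > 2 * c"
proof -
  obtain \<delta> where "\<delta> > c" and sp: "ell1_spreading_model (\<lambda>k. x k - x0) \<delta>"
    using assms(3) by blast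
  obtain M where M: "\<forall>k. norm (x k - x0) \<le> M"
    using sp unfolding ell1_spreading_model_def bounded_iff by auto
  have "M \<ge> 0"
    using M norm_ge_zero order_trans by metis
  obtain n :: nat where n: "2 * (\<delta> + M) / (\<delta> - c) < n"
    using reals_Archimedean2 by blast
  have "0 \<le> 2 * (\<delta> + M) / (\<delta> - c)"
    using \<open>\<delta> > c\<close> \<open>M \<ge> 0\<close> \<open>c > 0\<close> by simp
  with n have "n \<ge> 1"
    by simp
  have "2 * (\<delta> + M) \<le> (\<delta> - c) * n"
    using n \<open>\<delta> > c\<close> by (simp add: field_simps)
  then have "\<delta> + c \<le> asep (\<lambda>j. x ((n + j - 1)^2))"
    using \<open>n \<ge> 1\<close> \<open>\<delta> > c\<close> \<open>c > 0\<close>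
    by (intro asep_ge norm_average_difference_shifted_squares_ge[OF sp M]) auto
  then show ?thesis
    using \<open>n \<ge> 1\<close> \<open>\<delta> > c\<close> by (intro exI[of _ n]) auto
qed

end
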